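(* Let $p>1$, $p'=\frac{p}{p-1}$, $\Omega=\{x\in\mathbb{R}^2\;;\;|x|>1\}$, and let $\psi_R,\psi_R^*,P(R)$ be as in the context. Let $\delta>0$, $C_0>0$, $R_1>0$, $\theta\ge0$, $\kappa\in\mathbb{R}$, $T>R_1$, and $0\le w\in L^1_{\rm loc}([0,T);L^1(\Omega))$. Assume that for every $R\in[R_1,T)$, \[ \delta+\iint_{P(R)}w(x,t)\psi_R(x,t)\,dx\,dt\le C_0R^{-\frac{\theta}{p'}}(\log R)^{\frac{\kappa}{p'}}\left(\iint_{P(R)}w(x,t)\psi_R^*(x,t)\,dx\,dt\right)^{\frac1p}. \] Then, with a constant $C>0$ independent of $\delta$ (and for $\delta$ sufficiently small), \[ T\le\begin{cases} C\delta^{-\frac1\theta}(\log(\delta^{-1}))^{\frac{\kappa}{\theta}} & \text{if } \theta>0,\ \kappa\in\mathbb{R},\\[3pt] \exp\big(C\delta^{-\frac{p-1}{1-\kappa(p-1)}}\big) & \text{if } \theta=0,\ \kappa<\frac{1}{p-1},\\[3pt] \exp\exp\big(C\delta^{-(p-1)}\big) & \text{if } \theta=0,\ \kappa=\frac1{p-1}. \end{cases} \]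
   Context: Fix $\eta\in C^2([0,\infty))$ with $\eta=1$ on $[0,1/2]$, $\eta$ decreasing on $(1/2,1)$, $\eta=0$ on $[1,\infty)$; let $\eta^*(s)=0$ for $s\in[0,1/2)$ and $\eta^*(s)=\eta(s)$ for $s\ge1/2$. For $R>0$ set $s_R(x,t)=\frac{(|x|-1)^2+t}{R}$, $\psi_R(x,t)=[\eta(s_R(x,t))]^{2p'}$, $\psi_R^*(x,t)=[\eta^*(s_R(x,t))]^{2p'}$ for $(x,t)\in\Omega\times[0,\infty)$, and $P(R)=\{(x,t)\in\Omega\times[0,\infty)\;;\;(|x|-1)^2+t\le R\}$. *)

theory Defs
  imports "HOL-Analysis.Analysis"
begin

definition Omega :: "(real^2) set" where
  "Omega = {x. norm x > 1}"

definition conj_exp :: "real \<Rightarrow> real" where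
  "conj_exp p = p / (p - 1)"

definition cutoff :: "(real \<Rightarrow> real) \<Rightarrow> bool" where
  "cutoff \<eta> \<longleftrightarrow>
     (\<exists>\<eta>1 \<eta>2. (\<forall>s\<ge>0. (\<eta> has_real_derivative \<eta>1 s) (at s within {0..}))
            \<and> (\<forall>s\<ge>0. (\<eta>1 has_real_derivative \<eta>2 s) (at s within {0..}))
            \<and> continuous_on {0..} \<eta>2)
   \<and> (\<forall>s\<in>{0..1/2}. \<eta> s = 1)
   \<and> (\<forall>s t. 1/2 < s \<and> s \<le> t \<and> t < 1 \<longrightarrow> \<eta> t \<le> \<eta> s)
   \<and> (\<forall>s\<ge>1. \<eta> s = 0)"

definition eta_star :: "(real \<Rightarrow> real) \<Rightarrow> real \<Rightarrow> real" where
  "eta_star \<eta> s = (if s < 1/2 then 0 else \<eta> s)"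

definition sR :: "real \<Rightarrow> (real^2) \<Rightarrow> real \<Rightarrow> real" where
  "sR R x t = ((norm x - 1)^2 + t) / R"

definition psiR :: "(real \<Rightarrow> real) \<Rightarrow> real \<Rightarrow> real \<Rightarrow> (real^2) \<Rightarrow> real \<Rightarrow> real" where
  "psiR \<eta> p R x t = (\<eta> (sR R x t)) powr (2 * conj_exp p)"

definition psiR_star :: "(real \<Rightarrow> real) \<Rightarrow> real \<Rightarrow> real \<Rightarrow> (real^2) \<Rightarrow> real \<Rightarrow> real" where
  "psiR_star \<eta> p R x t = (eta_star \<eta> (sR R x t)) powr (2 * conj_exp p)"

definition PR :: "real \<Rightarrow> ((real^2) \<times> real) set" where
  "PR R = {(x, t). x \<in> Omega \<and> 0 \<le> t \<and> (norm x - 1)^2 + t \<le> R}"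

end

theory Submission
  imports Defs
begin

(* Write I(R) and I*(R) for the integrals of w against psi_R and psi_R^*.  Since the cut-offs at
   the scales R/2, R and 2R are nested, I(R/2) <= I(R), I*(R) <= I(R) and I*(R) + I(R/2) <= I(2R).
   The hypothesis at scale R therefore makes u_k = delta + I(4^k R0) grow at least like an explicit
   Euler step of u' = u^p / B_k, where B_k is the p-th power of C0 R^(-theta/p') (log R)^(kappa/p')
   at R = 2 4^k R0, and it also gives u_k^(p-1) <= B_k.  Hence u_k^(1-p) drops by at least c_p / B_k
   at each step, and summing up to the last dyadic scale below T gives
   sum_(k<K) 1/B_k <= C delta^(1-p) with 4^K ~ T.  For theta = 0 the left side grows like
   K^(1-kappa(p-1)), or like log K when kappa(p-1) = 1, which bounds K and thus T.  For theta > 0 the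
   single scale R = T/4 already gives delta^(p-1) <= B, which is inverted for T. *)

section \<open>Cut-off profiles\<close>

lemma cutoff_continuous_on:
  assumes "cutoff \<eta>" shows "continuous_on {0..} \<eta>"
proof -
  from assms obtain \<eta>' where "\<forall>s\<ge>0. (\<eta> has_real_derivative \<eta>' s) (at s within {0..})"
    unfolding cutoff_def by blast
  then show ?thesis
    unfolding continuous_on_eq_continuous_within by (metis DERIV_continuous atLeast_iff)
qed

lemma cutoff_range:
  assumes "cutoff \<eta>" "s \<ge> 0" shows "0 \<le> \<eta> s" "\<eta> s \<le> 1"
proof -
  have one: "\<And>s. s \<in> {0..1/2} \<Longrightarrow> \<eta> s = 1" and zero: "\<And>s. s \<ge> 1 \<Longrightarrow> \<eta> s = 0"
    and mono: "\<And>s t. 1/2 < s \<Longrightarrow> s \<le> t \<Longrightarrow> t < 1 \<Longrightarrow> \<eta> t \<le> \<eta> s"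
    using assms(1) unfolding cutoff_def by auto
  define F where "F a = at a within {1/2<..<(1::real)}" for a
  have lim: "(\<eta> \<longlongrightarrow> \<eta> a) (F a)" if "a \<in> {1/2, 1}" for a
  proof -
    have "continuous_on {1/2..1} \<eta>"
      using cutoff_continuous_on[OF assms(1)] by (rule continuous_on_subset) auto
    then have "(\<eta> \<longlongrightarrow> \<eta> a) (at a within {1/2..1})"
      using that unfolding continuous_on_def by auto
    then show ?thesis unfolding F_def by (rule tendsto_within_subset) auto
  qed
  have nontriv: "\<not> trivial_limit (F 1)" "\<not> trivial_limit (F (1/2))"
    unfolding F_def trivial_limit_within
    by (simp_all add: islimpt_greaterThanLessThan1 islimpt_greaterThanLessThan2)
  have "\<eta> 1 \<le> \<eta> s \<and> \<eta> s \<le> \<eta> (1/2)" if s: "1/2 < s" "s < 1"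
  proof
    have "eventually (\<lambda>t. t \<in> {s<..}) (nhds 1)"
      using s by (intro eventually_nhds_in_open) auto
    then have "eventually (\<lambda>t. \<eta> t \<le> \<eta> s) (F 1)"
      unfolding F_def eventually_at_filter by eventually_elim (use mono s in auto)
    then show "\<eta> 1 \<le> \<eta> s" using lim[of 1] nontriv(1) tendsto_upperbound by blast
    have "eventually (\<lambda>t. t \<in> {..<s}) (nhds (1/2))"
      using s by (intro eventually_nhds_in_open) auto
    then have "eventually (\<lambda>t. \<eta> s \<le> \<eta> t) (F (1/2))"
      unfolding F_def eventually_at_filter by eventually_elim (use mono s in auto)
    then show "\<eta> s \<le> \<eta> (1/2)" using lim[of "1/2"] nontriv(2) tendsto_lowerbound by blast
  qed
  moreover have "\<eta> 1 = 0" "\<eta> (1/2) = 1" using one zero by auto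
  ultimately show "0 \<le> \<eta> s" "\<eta> s \<le> 1"
    using one[of s] zero[of s] assms(2) by (cases "s \<le> 1/2"; cases "1 \<le> s"; force)+
qed

text \<open>\<open>psiR \<eta> p R\<close> and \<open>psiR_star \<eta> p R\<close> are \<open>profile \<eta> (2 * conj_exp p)\<close> and
  \<open>profile_star \<eta> (2 * conj_exp p)\<close> evaluated at \<open>sR R\<close>; \<open>\<eta>\<close> is extended by \<open>\<eta> 0\<close> to negative
  arguments so that the profiles are continuous, hence Borel, on the whole line.\<close>
definition profile :: "(real \<Rightarrow> real) \<Rightarrow> real \<Rightarrow> real \<Rightarrow> real" where
  "profile \<eta> q s = \<eta> (max 0 s) powr q"

definition profile_star :: "(real \<Rightarrow> real) \<Rightarrow> real \<Rightarrow> real \<Rightarrow> real" where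
  "profile_star \<eta> q s = (if s < 1/2 then 0 else profile \<eta> q s)"

lemma profile_nonneg: "0 \<le> profile \<eta> q s"
  by (simp add: profile_def)

lemma profile_le_one: "cutoff \<eta> \<Longrightarrow> q > 0 \<Longrightarrow> profile \<eta> q s \<le> 1"
  unfolding profile_def using cutoff_range[of \<eta> "max 0 s"] powr_mono2[of q "\<eta> (max 0 s)" 1] by simp

lemma profile_eq_one: "cutoff \<eta> \<Longrightarrow> s \<le> 1/2 \<Longrightarrow> profile \<eta> q s = 1"
  unfolding profile_def cutoff_def by auto

lemma profile_eq_zero: "cutoff \<eta> \<Longrightarrow> 1 \<le> s \<Longrightarrow> profile \<eta> q s = 0"
  unfolding profile_def cutoff_def by auto

lemma profile_star_le_profile: "profile_star \<eta> q s \<le> profile \<eta> q s"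
  by (simp add: profile_star_def profile_nonneg)

lemma profile_double_le:
  assumes "cutoff \<eta>" "q > 0" shows "profile \<eta> q (2 * s) \<le> profile \<eta> q s"
  using profile_le_one[OF assms] profile_eq_one[OF assms(1)] profile_eq_zero[OF assms(1)]
  by (cases "s \<le> 1/2") (auto simp: profile_nonneg)

lemma profile_star_add_profile_double_le:
  assumes "cutoff \<eta>" "q > 0" "0 \<le> s"
  shows "profile_star \<eta> q s + profile \<eta> q (2 * s) \<le> profile \<eta> q (s / 2)"
proof -
  have "profile \<eta> q (s / 2) = 1" if "s \<le> 1" using that by (intro profile_eq_one[OF assms(1)]) auto
  then show ?thesis
    using profile_le_one[OF assms(1,2)] profile_eq_zero[OF assms(1)]
    unfolding profile_star_def by (cases "s < 1/2"; cases "s \<le> 1") (auto simp: profile_nonneg)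
qed

lemma profile_measurable [measurable]:
  assumes "cutoff \<eta>" shows "profile \<eta> q \<in> borel_measurable borel"
proof -
  have "continuous_on UNIV (\<lambda>s. \<eta> (max 0 s))"
    by (rule continuous_on_compose2[OF cutoff_continuous_on[OF assms]]) (auto intro!: continuous_intros)
  then have [measurable]: "(\<lambda>s. \<eta> (max 0 s)) \<in> borel_measurable borel"
    by (rule borel_measurable_continuous_onI)
  show ?thesis
    unfolding profile_def by measurable
qed

definition rho :: "(real^2) \<times> real \<Rightarrow> real" where
  "rho z = (norm (fst z) - 1)^2 + snd z"

definition psi_mass :: "(real \<Rightarrow> real) \<Rightarrow> real \<Rightarrow> (real^2 \<Rightarrow> real \<Rightarrow> real) \<Rightarrow> real \<Rightarrow> real" where
  "psi_mass \<eta> p w R = (\<integral>z\<in>PR R. w (fst z) (snd z) * psiR \<eta> p R (fst z) (snd z) \<partial>lborel)"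

definition psi_star_mass :: "(real \<Rightarrow> real) \<Rightarrow> real \<Rightarrow> (real^2 \<Rightarrow> real \<Rightarrow> real) \<Rightarrow> real \<Rightarrow> real" where
  "psi_star_mass \<eta> p w R = (\<integral>z\<in>PR R. w (fst z) (snd z) * psiR_star \<eta> p R (fst z) (snd z) \<partial>lborel)"

lemma rho_measurable [measurable]: "rho \<in> borel_measurable borel"
  unfolding rho_def by (intro borel_measurable_continuous_onI continuous_intros)

lemma PR_subset: "PR R \<subseteq> Omega \<times> {0..R}"
  unfolding PR_def by auto (metis le_add_same_cancel2 order_trans zero_le_power2)

lemma indicator_PR_mult_psiR:
  assumes "cutoff \<eta>" "0 < R" "R \<le> R2"
  shows "indicator (PR R) z * (c * psiR \<eta> p R (fst z) (snd z))
           = indicator (Omega \<times> {0..R2}) z * (c * profile \<eta> (2 * conj_exp p) (rho z / R))"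
      (is ?psi)
    and "indicator (PR R) z * (c * psiR_star \<eta> p R (fst z) (snd z))
           = indicator (Omega \<times> {0..R2}) z * (c * profile_star \<eta> (2 * conj_exp p) (rho z / R))"
      (is ?psi_star)
proof -
  have s: "sR R (fst z) (snd z) = rho z / R" by (simp add: sR_def rho_def)
  consider "z \<in> PR R" | "z \<in> Omega \<times> {0..R2}" "z \<notin> PR R" | "z \<notin> Omega \<times> {0..R2}" by blast
  then have "?psi \<and> ?psi_star"
  proof cases
    case 1
    then have "0 \<le> rho z" "z \<in> Omega \<times> {0..R2}"
      using assms(3) PR_subset[of R] by (auto simp: PR_def rho_def)
    then show ?thesis
      using 1 assms(2) by (simp add: psiR_def psiR_star_def profile_star_def profile_def eta_star_def s)
  next
    case 2
    then have "1 \<le> rho z / R" using assms(2) by (auto simp: PR_def rho_def)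
    then show ?thesis
      using 2 profile_eq_zero[OF assms(1)] by (simp add: profile_star_def)
  next
    case 3
    then have "z \<notin> PR R"
      using assms(3) PR_subset[of R] by auto
    then show ?thesis using 3 by simp
  qed
  then show ?psi ?psi_star by auto
qed

lemma psi_mass_eq_set_integral:
  assumes "cutoff \<eta>" "0 < R" "R \<le> R2"
  shows "psi_mass \<eta> p w R = (LINT z:Omega \<times> {0..R2}|lborel.
           w (fst z) (snd z) * profile \<eta> (2 * conj_exp p) (rho z / R))"
    and "psi_star_mass \<eta> p w R = (LINT z:Omega \<times> {0..R2}|lborel.
           w (fst z) (snd z) * profile_star \<eta> (2 * conj_exp p) (rho z / R))"
  unfolding psi_mass_def psi_star_mass_def set_lebesgue_integral_def real_scaleR_def
  by (intro Bochner_Integration.integral_cong refl; simp only: indicator_PR_mult_psiR[OF assms])+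

lemma set_integrable_mult_bounded:
  fixes f g :: "'a \<Rightarrow> real"
  assumes f: "set_integrable M A f" and g: "g \<in> borel_measurable M" and bound: "\<And>x. \<bar>g x\<bar> \<le> 1"
  shows "set_integrable M A (\<lambda>x. f x * g x)"
proof (rule set_integrable_bound[OF f])
  have "(\<lambda>x. indicator A x * f x) \<in> borel_measurable M"
    using f unfolding set_integrable_def by (simp add: borel_measurable_integrable)
  then have "(\<lambda>x. indicator A x * f x * g x) \<in> borel_measurable M"
    using g by (rule borel_measurable_times)
  then show "set_borel_measurable M A (\<lambda>x. f x * g x)"
    unfolding set_borel_measurable_def by (simp add: mult.assoc)
  show "AE x in M. x \<in> A \<longrightarrow> norm (f x * g x) \<le> norm (f x)"
    using bound by (intro AE_I2) (simp add: abs_mult mult_left_le)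
qed

lemma set_integrable_mult_profile:
  assumes \<eta>: "cutoff \<eta>" and q: "q > 0" and w: "set_integrable lborel A (\<lambda>(x, t). w x t)"
  shows "set_integrable lborel A (\<lambda>z. w (fst z) (snd z) * profile \<eta> q (rho z / R))"
    and "set_integrable lborel A (\<lambda>z. w (fst z) (snd z) * profile_star \<eta> q (rho z / R))"
  using profile_le_one[OF \<eta> q] profile_nonneg[of \<eta> q] \<eta>
  by (intro set_integrable_mult_bounded[OF w[unfolded case_prod_unfold]];
      force simp: profile_star_def)+

lemma psi_mass_comparisons:
  fixes w :: "real^2 \<Rightarrow> real \<Rightarrow> real"
  assumes \<eta>: "cutoff \<eta>" and p: "p > 1" and M: "0 < M"
    and w_int: "set_integrable lborel (Omega \<times> {0..2*M}) (\<lambda>(x, t). w x t)"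
    and w_nonneg: "\<And>x t. x \<in> Omega \<Longrightarrow> t \<in> {0..2*M} \<Longrightarrow> 0 \<le> w x t"
  shows "0 \<le> psi_mass \<eta> p w (M/2)" and "0 \<le> psi_star_mass \<eta> p w M"
    and "psi_mass \<eta> p w (M/2) \<le> psi_mass \<eta> p w M"
    and "psi_star_mass \<eta> p w M \<le> psi_mass \<eta> p w M"
    and "psi_star_mass \<eta> p w M + psi_mass \<eta> p w (M/2) \<le> psi_mass \<eta> p w (2*M)"
proof -
  define D where "D = Omega \<times> {0..2*M}"
  define q where "q = 2 * conj_exp p"
  define W where "W \<phi> = (LINT z:D|lborel. w (fst z) (snd z) * \<phi> z)" for \<phi>
  have q: "q > 0" using p by (simp add: q_def conj_exp_def)
  have D_nonneg: "0 \<le> w (fst z) (snd z)" "0 \<le> rho z" if "z \<in> D" for z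
    using that w_nonneg by (auto simp: D_def mem_Times_iff rho_def)
  define \<Phi> where "\<Phi> R z = profile \<eta> q (rho z / R)" for R z
  define \<Phi>s where "\<Phi>s R z = profile_star \<eta> q (rho z / R)" for R z
  have int_\<Phi>: "set_integrable lborel D (\<lambda>z. w (fst z) (snd z) * \<Phi> R z)"
    and int_\<Phi>s: "set_integrable lborel D (\<lambda>z. w (fst z) (snd z) * \<Phi>s R z)" for R
    using set_integrable_mult_profile[OF \<eta> q w_int] by (simp_all add: D_def \<Phi>_def \<Phi>s_def)
  have mono: "W \<phi> \<le> W \<psi>"
    if "set_integrable lborel D (\<lambda>z. w (fst z) (snd z) * \<phi> z)"
       "set_integrable lborel D (\<lambda>z. w (fst z) (snd z) * \<psi> z)"
       "\<And>z. z \<in> D \<Longrightarrow> \<phi> z \<le> \<psi> z" for \<phi> \<psi>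
    unfolding W_def using that D_nonneg by (intro set_integral_mono) (auto intro: mult_left_mono)
  have nonneg: "0 \<le> W \<phi>"
    if "set_integrable lborel D (\<lambda>z. w (fst z) (snd z) * \<phi> z)" "\<And>z. 0 \<le> \<phi> z" for \<phi>
    using mono[of "\<lambda>_. 0" \<phi>] that by (simp add: W_def set_integrable_def)
  have masses: "psi_mass \<eta> p w R = W (\<Phi> R)" "psi_star_mass \<eta> p w R = W (\<Phi>s R)"
    if "0 < R" "R \<le> 2 * M" for R
    using psi_mass_eq_set_integral[OF \<eta> that] by (simp_all add: W_def \<Phi>_def \<Phi>s_def q_def D_def)
  have scale: "rho z / (M/2) = 2 * (rho z / M)" "rho z / (2 * M) = (rho z / M) / 2" for z
    by simp_all
  have masses_M: "psi_mass \<eta> p w (M/2) = W (\<Phi> (M/2))" "psi_mass \<eta> p w M = W (\<Phi> M)"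
      "psi_mass \<eta> p w (2*M) = W (\<Phi> (2*M))" "psi_star_mass \<eta> p w M = W (\<Phi>s M)"
    using masses M by auto
  show "0 \<le> psi_mass \<eta> p w (M/2)" "0 \<le> psi_star_mass \<eta> p w M"
    unfolding masses_M
    by (intro nonneg int_\<Phi> int_\<Phi>s; simp add: \<Phi>_def \<Phi>s_def profile_nonneg profile_star_def)+
  show "psi_mass \<eta> p w (M/2) \<le> psi_mass \<eta> p w M"
    unfolding masses_M
    by (intro mono int_\<Phi>) (simp only: \<Phi>_def scale profile_double_le[OF \<eta> q])
  show "psi_star_mass \<eta> p w M \<le> psi_mass \<eta> p w M"
    unfolding masses_M
    by (intro mono int_\<Phi> int_\<Phi>s) (simp add: \<Phi>_def \<Phi>s_def profile_star_le_profile)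
  have int_sum: "set_integrable lborel D (\<lambda>z. w (fst z) (snd z) * (\<Phi>s M z + \<Phi> (M/2) z))"
    using set_integral_add(1)[OF int_\<Phi>s int_\<Phi>] by (simp add: distrib_left)
  have "W (\<Phi>s M) + W (\<Phi> (M/2)) = W (\<lambda>z. \<Phi>s M z + \<Phi> (M/2) z)"
    unfolding W_def using int_\<Phi> int_\<Phi>s by (simp add: distrib_left)
  also have "\<dots> \<le> W (\<Phi> (2*M))"
  proof (rule mono[OF int_sum int_\<Phi>])
    fix z assume "z \<in> D"
    then have "0 \<le> rho z / M" using D_nonneg(2) M by simp
    then show "\<Phi>s M z + \<Phi> (M/2) z \<le> \<Phi> (2 * M) z"
      unfolding \<Phi>_def \<Phi>s_def scale by (rule profile_star_add_profile_double_le[OF \<eta> q])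
  qed
  finally show "psi_star_mass \<eta> p w M + psi_mass \<eta> p w (M/2) \<le> psi_mass \<eta> p w (2*M)"
    unfolding masses_M .
qed

section \<open>The growth recursion\<close>

lemma mass_inequality_step:
  fixes p \<delta> A I0 I1 I2 J :: real
  assumes p: "p > 1" and \<delta>: "\<delta> > 0" and A: "A > 0"
    and I0: "0 \<le> I0" and J: "0 \<le> J" and "I0 \<le> I1" and "J \<le> I1" and "J + I0 \<le> I2"
    and ineq: "\<delta> + I1 \<le> A * J powr (1/p)"
  shows "(\<delta> + I0) + (\<delta> + I0) powr p / A powr p \<le> \<delta> + I2"
    and "(\<delta> + I0) powr (p - 1) \<le> A powr p"
proof -
  define u v where "u = \<delta> + I0" and "v = \<delta> + I1"
  have u: "0 < u" "u \<le> v" using assms by (simp_all add: u_def v_def)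
  have "(v / A) powr p \<le> (J powr (1/p)) powr p"
    using ineq u p A by (intro powr_mono2) (simp_all add: v_def field_simps)
  also have "\<dots> = J" using p J by (simp add: powr_powr)
  finally have "v powr p / A powr p \<le> J" by (simp add: powr_divide)
  moreover have "u powr p / A powr p \<le> v powr p / A powr p"
    using u p by (intro divide_right_mono powr_mono2) auto
  ultimately show "u + u powr p / A powr p \<le> \<delta> + I2" using assms by (simp add: u_def)
  have "v \<le> A * v powr (1/p)"
  proof -
    have "J powr (1/p) \<le> v powr (1/p)"
      using assms p by (intro powr_mono2) (auto simp: v_def)
    then have "A * J powr (1/p) \<le> A * v powr (1/p)" using A by (intro mult_left_mono) auto
    then show ?thesis using ineq unfolding v_def by linarith
  qed
  moreover have "v = v powr (1/p) * v powr (1 - 1/p)" using u by (simp add: powr_add[symmetric])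
  ultimately have "v powr (1/p) * v powr (1 - 1/p) \<le> v powr (1/p) * A" by (simp add: mult.commute)
  then have "v powr (1 - 1/p) \<le> A" using u by simp
  then have "(v powr (1 - 1/p)) powr p \<le> A powr p" using p u by (intro powr_mono2) auto
  moreover have "(v powr (1 - 1/p)) powr p = v powr (p - 1)"
  proof -
    have "(1 - 1/p) * p = p - 1" using p by (simp add: field_simps)
    then show ?thesis by (simp add: powr_powr)
  qed
  moreover have "u powr (p - 1) \<le> v powr (p - 1)" using u p by (intro powr_mono2) auto
  ultimately show "u powr (p - 1) \<le> A powr p" by linarith
qed

lemma powr_one_minus_mean_value:
  fixes p u u' :: real
  assumes p: "p > 1" and u: "0 < u" "u \<le> u'"
  shows "(p - 1) * (u' - u) * u' powr (- p) \<le> u powr (1 - p) - u' powr (1 - p)"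
proof (cases "u = u'")
  case False
  then have "u < u'" using u by simp
  moreover have der: "DERIV (\<lambda>x. x powr (1 - p)) x :> (1 - p) * x powr (1 - p - 1)"
    if "u \<le> x" "x \<le> u'" for x
    using u that by (intro has_real_derivative_powr) auto
  ultimately obtain z where z: "u < z" "z < u'"
    and mvt: "u' powr (1 - p) - u powr (1 - p) = (u' - u) * ((1 - p) * z powr (1 - p - 1))"
    using MVT2[OF _ der] by blast
  have "(p - 1) * (u' - u) * u' powr (- p) \<le> (p - 1) * (u' - u) * z powr (- p)"
    using z u p by (intro mult_left_mono powr_mono2') auto
  also have "\<dots> = u powr (1 - p) - u' powr (1 - p)" using mvt by (simp add: algebra_simps)
  finally show ?thesis .
qed simp

definition decrement_const :: "real \<Rightarrow> real" where
  "decrement_const p = min ((p - 1) * 2 powr (- p)) (1 - 2 powr (1 - p))"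

lemma decrement_const_pos: "p > 1 \<Longrightarrow> decrement_const p > 0"
  unfolding decrement_const_def by (auto simp: powr_less_one)

text \<open>Steps with \<open>u' \<le> 2 u\<close> are handled by the mean value theorem; the a priori bound
  \<open>u\<^bsup>p-1\<^esup> \<le> B\<close> is only needed for steps that more than double \<open>u\<close>.\<close>
lemma powr_one_minus_decrement:
  fixes p u u' B :: real
  assumes p: "p > 1" and u: "u > 0" and B: "B > 0"
    and step: "u + u powr p / B \<le> u'" and bound: "u powr (p - 1) \<le> B"
  shows "decrement_const p / B \<le> u powr (1 - p) - u' powr (1 - p)"
proof -
  have "0 \<le> u powr p / B" using B by simp
  then have uu': "u \<le> u'" using step by linarith
  show ?thesis
  proof (cases "u' \<le> 2 * u")
    case True
    have "(p - 1) * 2 powr (- p) / B = (p - 1) * (u powr p / B) * (2 * u) powr (- p)"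
      using u B by (simp add: powr_mult powr_minus field_simps)
    also have "\<dots> \<le> (p - 1) * (u' - u) * u' powr (- p)"
      using step p u uu' True by (intro mult_mono mult_left_mono powr_mono2') auto
    also have "\<dots> \<le> u powr (1 - p) - u' powr (1 - p)"
      by (rule powr_one_minus_mean_value[OF p u uu'])
    finally have "(p - 1) * 2 powr (- p) / B \<le> u powr (1 - p) - u' powr (1 - p)" .
    moreover have "decrement_const p / B \<le> (p - 1) * 2 powr (- p) / B"
      unfolding decrement_const_def using B by (intro divide_right_mono) auto
    ultimately show ?thesis by linarith
  next
    case False
    have "u' powr (1 - p) \<le> (2 * u) powr (1 - p)" using False p u by (intro powr_mono2') auto
    then have "(1 - 2 powr (1 - p)) * u powr (1 - p) \<le> u powr (1 - p) - u' powr (1 - p)"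
      by (simp add: powr_mult algebra_simps)
    moreover have "1 / B \<le> 1 / u powr (p - 1)"
      using bound u B by (intro divide_left_mono) auto
    then have "1 / B \<le> u powr (1 - p)"
      using u by (simp add: powr_minus_divide[symmetric])
    moreover have "0 \<le> 1 - 2 powr (1 - p)" using p by (simp add: powr_less_one less_imp_le)
    ultimately have "(1 - 2 powr (1 - p)) * (1 / B) \<le> u powr (1 - p) - u' powr (1 - p)"
      by (meson mult_left_mono order_trans)
    moreover have "decrement_const p / B \<le> (1 - 2 powr (1 - p)) * (1 / B)"
      unfolding decrement_const_def using B by (simp add: divide_right_mono)
    ultimately show ?thesis by linarith
  qed
qed

lemma telescoping_decrements:
  fixes p \<delta> :: real and u B :: "nat \<Rightarrow> real"
  assumes p: "p > 1" and \<delta>: "\<delta> > 0" and u0: "\<delta> \<le> u 0"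
    and step: "\<And>k. k < K \<Longrightarrow> B k > 0 \<and> u k + u k powr p / B k \<le> u (Suc k) \<and> u k powr (p - 1) \<le> B k"
  shows "(\<Sum>k<K. decrement_const p / B k) \<le> \<delta> powr (1 - p)"
proof -
  have mono: "u k \<le> u (Suc k)" if "k < K" for k
  proof -
    have "0 \<le> u k powr p / B k" using step[OF that] by simp
    then show ?thesis using step[OF that] by linarith
  qed
  have pos: "0 < u k" if "k \<le> K" for k
    using that
  proof (induction k)
    case (Suc k) then show ?case using mono[of k] by simp
  qed (use u0 \<delta> in simp)
  have "(\<Sum>k<K. decrement_const p / B k) \<le> (\<Sum>k<K. u k powr (1 - p) - u (Suc k) powr (1 - p))"
    using step pos by (intro sum_mono powr_one_minus_decrement[OF p]) auto
  also have "\<dots> = u 0 powr (1 - p) - u K powr (1 - p)" by (rule sum_lessThan_telescope')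
  also have "\<dots> \<le> \<delta> powr (1 - p)"
  proof -
    have "u 0 powr (1 - p) \<le> \<delta> powr (1 - p)" using u0 \<delta> p by (intro powr_mono2') auto
    then show ?thesis using powr_ge_zero[of "u K" "1 - p"] by linarith
  qed
  finally show ?thesis .
qed

section \<open>Counting dyadic scales\<close>

lemma powr_ge_min_endpoints:
  fixes L x U e :: real
  assumes "0 < L" "L \<le> x" "x \<le> U"
  shows "min (L powr e) (U powr e) \<le> x powr e"
proof (cases "e \<ge> 0")
  case True
  then have "L powr e \<le> x powr e" using assms by (intro powr_mono2) auto
  then show ?thesis by simp
next
  case False
  then have "U powr e \<le> x powr e" using assms by (intro powr_mono2') auto
  then show ?thesis by simp
qed

text \<open>Only the upper half \<open>K/2 \<le> k < K\<close> of the sum is used: there all terms are comparable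
  to \<open>K\<^bsup>-\<beta>\<^esup>\<close>, whatever the sign of \<open>\<beta>\<close>.\<close>
lemma sum_powr_arith_progression_ge:
  fixes a b \<beta> :: real
  assumes a: "a > 0" and b: "b > 0"
  obtains c where "c > 0" "\<And>K::nat. c * real K powr (1 - \<beta>) \<le> (\<Sum>k<K. (a + real k * b) powr (- \<beta>))"
proof
  define m where "m = min a b"
  define c where "c = min ((m / 2) powr (- \<beta>)) ((a + b) powr (- \<beta>))"
  have m: "m > 0" using a b by (simp add: m_def)
  show "c / 2 > 0" using m a b by (simp add: c_def)
  fix K :: nat
  show "c / 2 * real K powr (1 - \<beta>) \<le> (\<Sum>k<K. (a + real k * b) powr (- \<beta>))"
  proof (cases "K = 0")
    case False
    then have K: "real K > 0" by simp
    have upper_half: "c * real K powr (- \<beta>) \<le> (a + real k * b) powr (- \<beta>)" if k: "K div 2 \<le> k" "k < K" for k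
    proof -
      have "m * (real K / 2) \<le> m * (real k + 1)" using k m by (intro mult_left_mono) linarith+
      also have "\<dots> = m + real k * m" by (simp add: algebra_simps)
      also have "\<dots> \<le> a + real k * b" unfolding m_def by (intro add_mono mult_left_mono) auto
      finally have lo: "m / 2 * real K \<le> a + real k * b" by simp
      have "a * 1 + real k * b \<le> a * real K + real K * b"
        using a b k K by (intro add_mono mult_left_mono mult_right_mono) auto
      then have "a + real k * b \<le> (a + b) * real K" by (simp add: algebra_simps)
      then have "min ((m / 2 * real K) powr (- \<beta>)) (((a + b) * real K) powr (- \<beta>)) \<le> (a + real k * b) powr (- \<beta>)"
        using powr_ge_min_endpoints[OF _ lo] m K by simp
      also have "min ((m / 2 * real K) powr (- \<beta>)) (((a + b) * real K) powr (- \<beta>)) = c * real K powr (- \<beta>)"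
        unfolding c_def powr_mult using K by (simp add: min_mult_distrib_right)
      finally show ?thesis .
    qed
    have "c / 2 * real K powr (1 - \<beta>) = real K / 2 * (c * real K powr (- \<beta>))"
      using K by (simp add: powr_diff powr_minus field_simps)
    also have "\<dots> \<le> real (K - K div 2) * (c * real K powr (- \<beta>))"
    proof (rule mult_right_mono)
      show "real K / 2 \<le> real (K - K div 2)" by linarith
      show "0 \<le> c * real K powr (- \<beta>)" using m a b by (simp add: c_def)
    qed
    also have "\<dots> = (\<Sum>k\<in>{K div 2..<K}. c * real K powr (- \<beta>))" by simp
    also have "\<dots> \<le> (\<Sum>k\<in>{K div 2..<K}. (a + real k * b) powr (- \<beta>))" using upper_half by (intro sum_mono) auto
    also have "\<dots> \<le> (\<Sum>k<K. (a + real k * b) powr (- \<beta>))" by (intro sum_mono2) auto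
    finally show ?thesis .
  qed simp
qed

lemma power4_mult_eq_exp: "R0 > 0 \<Longrightarrow> (4::real) ^ n * R0 = exp (real n * ln 4 + ln R0)"
  by (simp add: exp_add exp_of_nat_mult)

lemma count_le_of_powr_sum_le:
  fixes p \<beta> Q c \<delta> :: real and K :: nat
  assumes \<beta>: "\<beta> < 1" and Q: "Q > 0" and c: "c > 0" and \<delta>: "\<delta> > 0"
    and sum: "Q * (c * real K powr (1 - \<beta>)) \<le> \<delta> powr (1 - p)"
  shows "real K \<le> (1 / (Q * c)) powr (1 / (1 - \<beta>)) * \<delta> powr (- (p - 1) / (1 - \<beta>))"
proof -
  have "real K powr (1 - \<beta>) \<le> \<delta> powr (1 - p) / (Q * c)" using sum Q c by (simp add: field_simps)
  then have "(real K powr (1 - \<beta>)) powr (1 / (1 - \<beta>)) \<le> (\<delta> powr (1 - p) / (Q * c)) powr (1 / (1 - \<beta>))"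
    using \<beta> by (intro powr_mono2) auto
  also have "(real K powr (1 - \<beta>)) powr (1 / (1 - \<beta>)) = real K"
    using \<beta> by (cases "K = 0") (auto simp: powr_powr)
  also have "(1 - p) * (1 / (1 - \<beta>)) = - (p - 1) / (1 - \<beta>)" using \<beta> by (simp add: field_simps)
  then have "(\<delta> powr (1 - p) / (Q * c)) powr (1 / (1 - \<beta>))
      = (1 / (Q * c)) powr (1 / (1 - \<beta>)) * \<delta> powr (- (p - 1) / (1 - \<beta>))"
    using \<delta> by (simp add: powr_divide powr_powr divide_inverse powr_mult mult.commute)
  finally show ?thesis .
qed

lemma count_le_of_harmonic_sum_le:
  fixes c Y :: real and f :: "nat \<Rightarrow> real"
  assumes c: "c > 0" and f: "\<And>k. c / (real k + 1) \<le> f k" and sum: "(\<Sum>k<K. f k) \<le> Y"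
  shows "real K + 1 \<le> exp (Y / c)"
proof -
  have "c * ln (real K + 1) \<le> c * harm K" using c ln_le_harm[of K] by (intro mult_left_mono) auto
  also have "\<dots> = (\<Sum>k<K. c / (real k + 1))"
    by (simp add: harm_altdef sum_distrib_left add.commute divide_inverse)
  also have "\<dots> \<le> (\<Sum>k<K. f k)" using f by (rule sum_mono)
  also have "\<dots> \<le> Y" by (rule sum)
  finally have "ln (real K + 1) \<le> Y / c" using c by (simp add: field_simps)
  then show ?thesis
    by (metis exp_le_cancel_iff exp_ln of_nat_Suc of_nat_0_less_iff zero_less_Suc add.commute)
qed

lemma dyadic_count_bound_power:
  fixes p \<beta> Q a b R0 :: real
  assumes p: "p > 1" and \<beta>: "\<beta> < 1" and Q: "Q > 0" and a: "a > 0" and b: "b > 0" and R0: "R0 \<ge> 1"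
  obtains C where "C > 0"
    "\<And>\<delta> (K::nat) T. 0 < \<delta> \<Longrightarrow> \<delta> < 1 \<Longrightarrow> T \<le> 4 ^ (K + 1) * R0 \<Longrightarrow>
       (\<Sum>k<K. Q * (a + real k * b) powr (- \<beta>)) \<le> \<delta> powr (1 - p) \<Longrightarrow>
       T \<le> exp (C * \<delta> powr (- (p - 1) / (1 - \<beta>)))"
proof -
  obtain c where c: "c > 0" "\<And>K::nat. c * real K powr (1 - \<beta>) \<le> (\<Sum>k<K. (a + real k * b) powr (- \<beta>))"
    using sum_powr_arith_progression_ge[OF a b] by blast
  define G where "G = (1 / (Q * c)) powr (1 / (1 - \<beta>))"
  have G: "G \<ge> 0" by (simp add: G_def)
  show thesis
  proof (rule that)
    have "0 < (G + 1) * ln (4::real)" "0 \<le> ln R0" using G R0 by auto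
    then show "(G + 1) * ln 4 + ln R0 > 0" by linarith
    fix \<delta> :: real and K :: nat and T :: real
    assume \<delta>: "0 < \<delta>" "\<delta> < 1" and T: "T \<le> 4 ^ (K + 1) * R0"
      and sum: "(\<Sum>k<K. Q * (a + real k * b) powr (- \<beta>)) \<le> \<delta> powr (1 - p)"
    define Y where "Y = \<delta> powr (- (p - 1) / (1 - \<beta>))"
    have "- (p - 1) / (1 - \<beta>) \<le> 0" using p \<beta> by (simp add: divide_nonpos_pos)
    then have Y: "1 \<le> Y" unfolding Y_def using \<delta> powr_mono'[of "- (p - 1) / (1 - \<beta>)" 0 \<delta>] by simp
    have "Q * (c * real K powr (1 - \<beta>)) \<le> Q * (\<Sum>k<K. (a + real k * b) powr (- \<beta>))"
      using c(2)[of K] Q by (intro mult_left_mono) auto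
    also have "\<dots> \<le> \<delta> powr (1 - p)" using sum by (simp add: sum_distrib_left)
    finally have K: "real K \<le> G * Y"
      unfolding G_def Y_def by (rule count_le_of_powr_sum_le[OF \<beta> Q c(1) \<delta>(1)])
    have "T \<le> exp ((real K + 1) * ln 4 + ln R0)"
      using T power4_mult_eq_exp[of R0 "K + 1"] R0 by (simp add: ac_simps)
    also have "(real K + 1) * ln 4 + ln R0 \<le> (G * Y + Y) * ln 4 + ln R0 * Y"
      using K Y R0 by (intro add_mono mult_right_mono) (auto simp: mult_le_cancel_left1)
    finally show "T \<le> exp (((G + 1) * ln 4 + ln R0) * \<delta> powr (- (p - 1) / (1 - \<beta>)))"
      by (simp add: Y_def algebra_simps)
  qed
qed

lemma dyadic_count_bound_harmonic:
  fixes p Q a b R0 :: real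
  assumes p: "p > 1" and Q: "Q > 0" and a: "a > 0" and b: "b > 0" and R0: "R0 \<ge> 1"
  obtains C where "C > 0"
    "\<And>\<delta> (K::nat) T. 0 < \<delta> \<Longrightarrow> \<delta> < 1 \<Longrightarrow> T \<le> 4 ^ (K + 1) * R0 \<Longrightarrow>
       (\<Sum>k<K. Q * (a + real k * b) powr (- 1)) \<le> \<delta> powr (1 - p) \<Longrightarrow>
       T \<le> exp (exp (C * \<delta> powr (- (p - 1))))"
proof -
  define L where "L = ln 4 + ln R0"
  define c where "c = Q / (a + b)"
  have L: "L > 0" using R0 by (simp add: L_def add_pos_nonneg)
  have c: "c > 0" using Q a b by (simp add: c_def)
  show thesis
  proof (rule that)
    show "1 / c + L > 0" using c L by (simp add: add_pos_pos)
    fix \<delta> :: real and K :: nat and T :: real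
    assume \<delta>: "0 < \<delta>" "\<delta> < 1" and T: "T \<le> 4 ^ (K + 1) * R0"
      and sum: "(\<Sum>k<K. Q * (a + real k * b) powr (- 1)) \<le> \<delta> powr (1 - p)"
    define Y where "Y = \<delta> powr (1 - p)"
    have Y: "1 \<le> Y" unfolding Y_def using \<delta> p powr_mono'[of "1 - p" 0 \<delta>] by simp
    have harmonic_term: "c / (real k + 1) \<le> Q * (a + real k * b) powr (- 1)" for k :: nat
    proof -
      have "a + real k * b \<le> (a + b) * (real k + 1)" using a b by (simp add: algebra_simps)
      then show ?thesis
        using Q a b by (simp add: c_def powr_minus_divide frac_le add_pos_nonneg)
    qed
    have "real K + 1 \<le> exp (Y / c)"
      using count_le_of_harmonic_sum_le[OF c harmonic_term] sum by (simp add: Y_def)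
    then have K: "L * (real K + 1) \<le> L * exp (Y / c)" using L by (intro mult_left_mono) auto
    have "L \<le> L * Y" using L Y by (simp add: mult_le_cancel_left1)
    also have "\<dots> \<le> exp (L * Y)" using exp_ge_add_one_self[of "L * Y"] by linarith
    finally have L_le: "L \<le> exp (L * Y)" .
    have "(real K + 1) * ln 4 + ln R0 \<le> L * (real K + 1)"
      using R0 by (simp add: L_def algebra_simps)
    also have "\<dots> \<le> exp (L * Y) * exp (Y / c)"
      using K L_le by (meson exp_gt_zero less_imp_le mult_right_mono order_trans)
    also have "\<dots> = exp ((1 / c + L) * \<delta> powr (- (p - 1)))"
      by (simp add: Y_def exp_add[symmetric] algebra_simps)
    finally have "exp ((real K + 1) * ln 4 + ln R0) \<le> exp (exp ((1 / c + L) * \<delta> powr (- (p - 1))))"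
      by simp
    moreover have "T \<le> exp ((real K + 1) * ln 4 + ln R0)"
      using T power4_mult_eq_exp[of R0 "K + 1"] R0 by (simp add: ac_simps)
    ultimately show "T \<le> exp (exp ((1 / c + L) * \<delta> powr (- (p - 1))))" by linarith
  qed
qed

section \<open>Inverting the single-scale bound\<close>

lemma ln_le_linear: "0 < x \<Longrightarrow> 0 < \<epsilon> \<Longrightarrow> ln x \<le> \<epsilon> * x - 1 - ln (\<epsilon>::real)"
  using ln_le_minus_one[of "\<epsilon> * x"] by (simp add: ln_mult)

lemma linear_dominates_log:
  fixes \<kappa> :: real
  obtains c where "\<And>l. 1 \<le> l \<Longrightarrow> l / 2 - c \<le> l + \<kappa> * ln l"
proof (cases "\<kappa> \<ge> 0")
  case True
  then show thesis by (intro that[of 0]) auto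
next
  case False
  define e where "e = 1 / (2 * (- \<kappa>))"
  have e: "e > 0" using False by (simp add: e_def)
  show thesis
  proof (rule that)
    fix l :: real assume l: "1 \<le> l"
    have "- \<kappa> * ln l \<le> - \<kappa> * (e * l - 1 - ln e)"
      using False ln_le_linear[of l e] l e by (intro mult_left_mono) auto
    also have "\<dots> = l / 2 + \<kappa> * (1 + ln e)" using False by (simp add: e_def field_simps)
    finally show "l / 2 - \<kappa> * (1 + ln e) \<le> l + \<kappa> * ln l" by linarith
  qed
qed

lemma log_inequality_inversion_pos:
  fixes \<theta> \<kappa> c :: real
  assumes \<theta>: "\<theta> > 0" and \<kappa>: "\<kappa> > 0"
  obtains l0 c1 where "1 \<le> l0"
    "\<And>m l. l0 \<le> l \<Longrightarrow> 0 < m \<Longrightarrow> \<theta> * m \<le> c + l + \<kappa> * ln m \<Longrightarrow> \<theta> * m \<le> c1 + l + \<kappa> * ln l"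
proof -
  define e where "e = \<theta> / (2 * \<kappa>)"
  define c2 where "c2 = \<kappa> * (-1 - ln e)"
  have e: "e > 0" using \<kappa> \<theta> by (simp add: e_def)
  show thesis
  proof (rule that[of "max 1 \<bar>c + c2\<bar>" "c + \<kappa> * ln (4 / \<theta>)"])
    fix m l :: real
    assume l: "max 1 \<bar>c + c2\<bar> \<le> l" and m: "0 < m" and ineq: "\<theta> * m \<le> c + l + \<kappa> * ln m"
    have "\<kappa> * ln m \<le> \<kappa> * (e * m - 1 - ln e)" using ln_le_linear[OF m e] \<kappa> by (intro mult_left_mono) auto
    also have "\<dots> = \<theta> * m / 2 + c2" using \<kappa> by (simp add: c2_def e_def field_simps)
    finally have "\<theta> * m / 2 \<le> 2 * l" using ineq l abs_ge_self[of "c + c2"] by linarith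
    then have "m \<le> (4 / \<theta>) * l" using \<theta> by (simp add: field_simps)
    then have "ln m \<le> ln ((4 / \<theta>) * l)" using m l \<theta> by simp
    also have "\<dots> = ln (4 / \<theta>) + ln l" using l \<theta> ln_mult[of "4 / \<theta>" l] by simp
    finally have "\<kappa> * ln m \<le> \<kappa> * ln (4 / \<theta>) + \<kappa> * ln l"
      using \<kappa> by (simp add: distrib_left[symmetric] mult_left_mono)
    then show "\<theta> * m \<le> c + \<kappa> * ln (4 / \<theta>) + l + \<kappa> * ln l" using ineq by linarith
  qed simp
qed

lemma log_inequality_inversion_nonpos:
  fixes \<theta> \<kappa> c :: real
  assumes \<theta>: "\<theta> > 0" and \<kappa>: "\<kappa> \<le> 0"
  obtains l0 c1 where "1 \<le> l0"
    "\<And>m l. l0 \<le> l \<Longrightarrow> 0 < m \<Longrightarrow> \<theta> * m \<le> c + l + \<kappa> * ln m \<Longrightarrow> \<theta> * m \<le> c1 + l + \<kappa> * ln l"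
proof -
  obtain c3 where c3: "\<And>l. 1 \<le> l \<Longrightarrow> l / 2 - c3 \<le> l + \<kappa> * ln l"
    using linear_dominates_log by blast
  show thesis
  proof (rule that[of 1 "max (c - \<kappa> * ln (2 * \<theta>)) c3"])
    fix m l :: real
    assume l: "1 \<le> l" and m: "0 < m" and ineq: "\<theta> * m \<le> c + l + \<kappa> * ln m"
    show "\<theta> * m \<le> max (c - \<kappa> * ln (2 * \<theta>)) c3 + l + \<kappa> * ln l"
    proof (cases "l / (2 * \<theta>) \<le> m")
      case True
      then have "ln (l / (2 * \<theta>)) \<le> ln m" using l m \<theta> by simp
      then have "ln l - ln (2 * \<theta>) \<le> ln m" using l \<theta> by (simp add: ln_div)
      then have "\<kappa> * ln m \<le> \<kappa> * (ln l - ln (2 * \<theta>))" using \<kappa> by (simp add: mult_left_mono_neg)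
      then show ?thesis using ineq by (simp add: algebra_simps)
    next
      case False
      then have "\<theta> * m \<le> l / 2" using \<theta> by (simp add: field_simps)
      then show ?thesis using c3[OF l] by linarith
    qed
  qed simp
qed

lemma log_inequality_inversion:
  fixes \<theta> \<kappa> c :: real
  assumes \<theta>: "\<theta> > 0"
  obtains l0 c1 where "1 \<le> l0"
    "\<And>m l. l0 \<le> l \<Longrightarrow> 0 < m \<Longrightarrow> \<theta> * m \<le> c + l + \<kappa> * ln m \<Longrightarrow> \<theta> * m \<le> c1 + l + \<kappa> * ln l"
proof (cases "\<kappa> \<le> 0")
  case True
  show thesis by (rule log_inequality_inversion_nonpos[OF \<theta> True, of c]) (rule that)
next
  case False
  then have \<kappa>: "\<kappa> > 0" by simp
  show thesis by (rule log_inequality_inversion_pos[OF \<theta> \<kappa>, of c]) (rule that)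
qed

lemma powr_ln_inverse_eq_exp:
  fixes \<delta> \<theta> \<kappa> :: real
  assumes "0 < \<delta>" "\<delta> < 1"
  shows "\<delta> powr (- 1 / \<theta>) * ln (1 / \<delta>) powr (\<kappa> / \<theta>)
       = exp ((ln (1 / \<delta>) + \<kappa> * ln (ln (1 / \<delta>))) / \<theta>)"
  using assms by (simp add: powr_def ln_div exp_add[symmetric] add_divide_distrib diff_divide_distrib)

text \<open>In the variables \<open>m = ln (T/4)\<close> and \<open>l = ln (1/\<delta>)\<close> the hypothesis reads
  \<open>\<theta> m \<le> c\<^sub>0 + l + \<kappa> ln m\<close>, and the bound \<open>C \<delta>\<^bsup>-1/\<theta>\<^esup> (ln (1/\<delta>))\<^bsup>\<kappa>/\<theta>\<^esup>\<close>
  is \<open>exp ((l + \<kappa> ln l)/\<theta>)\<close> up to the factor \<open>C\<close>.\<close>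
lemma lifespan_bound_from_log_inequality:
  fixes \<theta> \<kappa> c0 R0 :: real
  assumes \<theta>: "\<theta> > 0" and R0: "R0 \<ge> 1"
  obtains C \<delta>0 where "C > 0" "\<delta>0 > 0"
    "\<And>\<delta> T. 0 < \<delta> \<Longrightarrow> \<delta> < \<delta>0 \<Longrightarrow>
       (4 * R0 < T \<Longrightarrow> \<theta> * ln (T / 4) \<le> c0 + ln (1 / \<delta>) + \<kappa> * ln (ln (T / 4))) \<Longrightarrow>
       T \<le> C * \<delta> powr (- 1 / \<theta>) * ln (1 / \<delta>) powr (\<kappa> / \<theta>)"
proof (rule log_inequality_inversion[OF \<theta>, where c = c0 and \<kappa> = \<kappa>])
  fix l0 c1 assume l0: "1 \<le> l0" and c1: "\<And>m l. l0 \<le> l \<Longrightarrow> 0 < m \<Longrightarrow>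
      \<theta> * m \<le> c0 + l + \<kappa> * ln m \<Longrightarrow> \<theta> * m \<le> c1 + l + \<kappa> * ln l"
  obtain c3 where c3: "\<And>l. 1 \<le> l \<Longrightarrow> l / 2 - c3 \<le> l + \<kappa> * ln l"
    using linear_dominates_log by blast
  define C where "C = 4 * max (exp (c1 / \<theta>)) (R0 * exp ((c3 - 1/2) / \<theta>))"
  show thesis
  proof (rule that)
    show "C > 0" "exp (- l0) > 0" using R0 by (auto simp: C_def max_def)
    fix \<delta> T :: real
    assume \<delta>: "0 < \<delta>" "\<delta> < exp (- l0)"
      and ineq: "4 * R0 < T \<Longrightarrow> \<theta> * ln (T / 4) \<le> c0 + ln (1 / \<delta>) + \<kappa> * ln (ln (T / 4))"
    define l where "l = ln (1 / \<delta>)"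
    define X where "X = exp ((l + \<kappa> * ln l) / \<theta>)"
    have "ln \<delta> < - l0" using \<delta> ln_less_cancel_iff[of \<delta> "exp (- l0)"] by simp
    then have l: "l0 < l" using \<delta> by (simp add: l_def ln_div)
    have "ln \<delta> < 0" using \<open>ln \<delta> < - l0\<close> l0 by linarith
    then have X: "\<delta> powr (- 1 / \<theta>) * ln (1 / \<delta>) powr (\<kappa> / \<theta>) = X"
      using powr_ln_inverse_eq_exp[of \<delta> \<theta> \<kappa>] \<delta> by (simp add: X_def l_def)
    have "T \<le> C * X"
    proof (cases "4 * R0 < T")
      case True
      define m where "m = ln (T / 4)"
      have m: "0 < m" using True R0 by (simp add: m_def)
      have "\<theta> * m \<le> c1 + l + \<kappa> * ln l" using c1[OF _ m] ineq[OF True] l by (simp add: m_def l_def)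
      then have "m \<le> c1 / \<theta> + (l + \<kappa> * ln l) / \<theta>" using \<theta> by (simp add: field_simps)
      then have "exp m \<le> exp (c1 / \<theta>) * X" by (simp add: X_def exp_add[symmetric])
      moreover have "exp m = T / 4" using True R0 by (simp add: m_def)
      ultimately have "T / 4 \<le> exp (c1 / \<theta>) * X" by simp
      moreover have "exp (c1 / \<theta>) * X \<le> max (exp (c1 / \<theta>)) (R0 * exp ((c3 - 1/2) / \<theta>)) * X"
        by (intro mult_right_mono) (auto simp: X_def)
      ultimately show ?thesis by (simp add: C_def)
    next
      case False
      have "(1/2 - c3) / \<theta> \<le> (l + \<kappa> * ln l) / \<theta>"
        using c3[of l] l l0 \<theta> by (intro divide_right_mono) auto
      then have "R0 \<le> R0 * exp ((c3 - 1/2) / \<theta>) * X"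
        using R0 by (simp add: X_def mult.assoc exp_add[symmetric] diff_divide_distrib)
      moreover have "R0 * exp ((c3 - 1/2) / \<theta>) * X \<le> max (exp (c1 / \<theta>)) (R0 * exp ((c3 - 1/2) / \<theta>)) * X"
        by (intro mult_right_mono) (auto simp: X_def)
      ultimately show ?thesis using False unfolding C_def by (simp only: mult.assoc)
    qed
    then show "T \<le> C * \<delta> powr (- 1 / \<theta>) * ln (1 / \<delta>) powr (\<kappa> / \<theta>)" using X by (simp add: mult.assoc)
  qed
qed

section \<open>Iteration along dyadic scales\<close>

lemma exists_dyadic_scale:
  fixes R0 T :: real
  assumes R0: "R0 > 0"
  obtains K :: nat where "T \<le> 4 ^ (K + 1) * R0" "K = 0 \<or> 4 ^ K * R0 < T"
proof -
  obtain n where "T / R0 < 4 ^ n" using real_arch_pow[of 4 "T / R0"] by auto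
  then have ex: "T \<le> 4 ^ n * R0" using R0 by (simp add: field_simps)
  define N where "N = (LEAST n. T \<le> 4 ^ n * R0)"
  have N: "T \<le> 4 ^ N * R0" unfolding N_def by (rule LeastI[of "\<lambda>n. T \<le> 4 ^ n * R0", OF ex])
  show thesis
  proof (cases N)
    case 0
    then show thesis using N R0 by (intro that[of 0]) auto
  next
    case (Suc K)
    then have "\<not> T \<le> 4 ^ K * R0" using not_less_Least[of K "\<lambda>n. T \<le> 4 ^ n * R0"] by (simp add: N_def)
    then show thesis using N Suc by (intro that[of K]) auto
  qed
qed

definition scale_factor :: "real \<Rightarrow> real \<Rightarrow> real \<Rightarrow> real \<Rightarrow> real \<Rightarrow> real" where
  "scale_factor C0 \<theta> \<kappa> p R = C0 * R powr (- \<theta> / conj_exp p) * ln R powr (\<kappa> / conj_exp p)"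

lemma scale_factor_pos: "C0 > 0 \<Longrightarrow> R > 1 \<Longrightarrow> scale_factor C0 \<theta> \<kappa> p R > 0"
  by (simp add: scale_factor_def)

lemma scale_factor_theta_zero:
  assumes p: "p > 1" and C0: "C0 > 0" and R: "R > 1"
  shows "scale_factor C0 0 \<kappa> p R powr p = C0 powr p * ln R powr (\<kappa> * (p - 1))"
proof -
  have "\<kappa> / conj_exp p * p = \<kappa> * (p - 1)" using p by (simp add: conj_exp_def field_simps)
  then show ?thesis using C0 R by (simp add: scale_factor_def powr_mult powr_powr)
qed

locale lifespan_setting =
  fixes \<eta> :: "real \<Rightarrow> real" and p C0 R1 \<theta> \<kappa> \<delta> T :: real and w :: "real^2 \<Rightarrow> real \<Rightarrow> real"
  assumes p: "p > 1" and cutoff: "cutoff \<eta>" and C0: "C0 > 0" and \<delta>: "\<delta> > 0"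
    and w_nonneg: "\<And>x t. x \<in> Omega \<Longrightarrow> 0 \<le> t \<Longrightarrow> t < T \<Longrightarrow> 0 \<le> w x t"
    and w_integrable: "\<And>T'. 0 \<le> T' \<Longrightarrow> T' < T \<Longrightarrow>
      set_integrable lborel (Omega \<times> {0..T'}) (\<lambda>(x, t). w x t)"
    and mass_inequality: "\<And>R. R1 \<le> R \<Longrightarrow> R < T \<Longrightarrow> 1 < R \<Longrightarrow>
      \<delta> + psi_mass \<eta> p w R \<le> scale_factor C0 \<theta> \<kappa> p R * psi_star_mass \<eta> p w R powr (1 / p)"
begin

lemma w_conditions:
  assumes "0 \<le> T'" "T' < T"
  shows "set_integrable lborel (Omega \<times> {0..T'}) (\<lambda>(x, t). w x t)"
    and "\<And>x t. x \<in> Omega \<Longrightarrow> t \<in> {0..T'} \<Longrightarrow> 0 \<le> w x t"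
  using assms by (auto intro: w_integrable w_nonneg)

lemma psi_mass_nonneg:
  assumes "0 < R" "4 * R < T" shows "0 \<le> psi_mass \<eta> p w R"
proof -
  have "0 < 2 * R" "0 \<le> 2 * (2 * R)" "2 * (2 * R) < T" using assms by auto
  from psi_mass_comparisons(1)[OF cutoff p this(1) w_conditions[OF this(2,3)]] show ?thesis by simp
qed

lemma scale_step:
  assumes M: "1 < M" "R1 \<le> M" "2 * M < T"
  defines "u \<equiv> \<delta> + psi_mass \<eta> p w (M/2)" and "B \<equiv> scale_factor C0 \<theta> \<kappa> p M powr p"
  shows "u + u powr p / B \<le> \<delta> + psi_mass \<eta> p w (2 * M)" and "u powr (p - 1) \<le> B"
proof -
  have "0 < M" "0 \<le> 2 * M" "2 * M < T" using M by auto
  note masses = psi_mass_comparisons[OF cutoff p this(1) w_conditions[OF this(2,3)]]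
  have "\<delta> + psi_mass \<eta> p w M \<le> scale_factor C0 \<theta> \<kappa> p M * psi_star_mass \<eta> p w M powr (1 / p)"
    using M by (intro mass_inequality) auto
  note step = mass_inequality_step[OF p \<delta> scale_factor_pos[OF C0 M(1)] masses this]
  then show "u + u powr p / B \<le> \<delta> + psi_mass \<eta> p w (2 * M)" "u powr (p - 1) \<le> B"
    using M by (simp_all add: u_def B_def)
qed

lemma dyadic_decrement_sum:
  assumes R0: "1 \<le> R0" "R1 \<le> R0" and K: "0 < K" "4 ^ K * R0 < T"
  shows "(\<Sum>k<K. decrement_const p / scale_factor C0 \<theta> \<kappa> p (2 * 4 ^ k * R0) powr p) \<le> \<delta> powr (1 - p)"
proof (rule telescoping_decrements[OF p \<delta>, where u = "\<lambda>k. \<delta> + psi_mass \<eta> p w (4 ^ k * R0)"])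
  have "4 ^ 1 * R0 \<le> 4 ^ K * R0" using K R0 by (intro mult_right_mono power_increasing) auto
  then have "4 * R0 < T" using K by simp
  then show "\<delta> \<le> \<delta> + psi_mass \<eta> p w (4 ^ 0 * R0)" using R0 psi_mass_nonneg[of R0] by simp
  fix k assume "k < K"
  define M where "M = 2 * 4 ^ k * R0"
  have "(4::real) ^ Suc k \<le> 4 ^ K" using \<open>k < K\<close> by (intro power_increasing) auto
  then have "4 ^ Suc k * R0 \<le> 4 ^ K * R0" using R0 by (intro mult_right_mono) auto
  then have "4 * (4 ^ k * R0) < T" using K by simp
  moreover have "R0 \<le> 4 ^ k * R0" using R0 by simp
  ultimately have M: "1 < M" "R1 \<le> M" "2 * M < T" using R0 unfolding M_def mult.assoc by linarith+
  have "M / 2 = 4 ^ k * R0" "2 * M = 4 ^ Suc k * R0" by (simp_all add: M_def)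
  note step = scale_step[OF M, unfolded this]
  show "scale_factor C0 \<theta> \<kappa> p (2 * 4 ^ k * R0) powr p > 0
      \<and> (\<delta> + psi_mass \<eta> p w (4 ^ k * R0)) + (\<delta> + psi_mass \<eta> p w (4 ^ k * R0)) powr p
          / scale_factor C0 \<theta> \<kappa> p (2 * 4 ^ k * R0) powr p \<le> \<delta> + psi_mass \<eta> p w (4 ^ Suc k * R0)
      \<and> (\<delta> + psi_mass \<eta> p w (4 ^ k * R0)) powr (p - 1) \<le> scale_factor C0 \<theta> \<kappa> p (2 * 4 ^ k * R0) powr p"
    using step scale_factor_pos[OF C0 M(1), of \<theta> \<kappa> p] unfolding M_def by (auto simp del: power_Suc)
qed

lemma dyadic_count:
  assumes R0: "1 \<le> R0" "R1 \<le> R0"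
  obtains K where "T \<le> 4 ^ (K + 1) * R0"
    "(\<Sum>k<K. decrement_const p / scale_factor C0 \<theta> \<kappa> p (2 * 4 ^ k * R0) powr p) \<le> \<delta> powr (1 - p)"
proof -
  obtain K where K: "T \<le> 4 ^ (K + 1) * R0" "K = 0 \<or> 4 ^ K * R0 < T"
    using exists_dyadic_scale[of R0 T] R0 by auto
  show thesis
  proof (rule that[OF K(1)])
    show "(\<Sum>k<K. decrement_const p / scale_factor C0 \<theta> \<kappa> p (2 * 4 ^ k * R0) powr p) \<le> \<delta> powr (1 - p)"
      using K(2) dyadic_decrement_sum[OF R0, of K] by (cases "K = 0") auto
  qed
qed

lemma log_inequality:
  assumes R0: "1 \<le> R0" "R1 \<le> R0" and T: "4 * R0 < T"
  shows "\<theta> * ln (T / 4) \<le> conj_exp p * ln C0 + ln (1 / \<delta>) + \<kappa> * ln (ln (T / 4))"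
proof -
  define M where "M = T / 4"
  have M: "1 < M" "R1 \<le> M" "2 * M < T" using R0 T by (auto simp: M_def)
  define A where "A = scale_factor C0 \<theta> \<kappa> p M"
  have A: "A > 0" using scale_factor_pos[OF C0 M(1)] by (simp add: A_def)
  have q: "conj_exp p \<noteq> 0" using p by (simp add: conj_exp_def)
  have "\<delta> powr (p - 1) \<le> (\<delta> + psi_mass \<eta> p w (M/2)) powr (p - 1)"
    using psi_mass_nonneg[of "M/2"] M p \<delta> by (intro powr_mono2) auto
  also have "\<dots> \<le> A powr p" using scale_step(2)[OF M] by (simp add: A_def)
  finally have "ln (\<delta> powr (p - 1)) \<le> ln (A powr p)" using \<delta> A by (subst ln_le_cancel_iff) auto
  then have "(p - 1) * ln \<delta> \<le> p * ln A" using \<delta> A by (simp add: ln_powr)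
  also have "p * ln A = (p - 1) * (conj_exp p * ln A)" using p by (simp add: conj_exp_def)
  finally have "ln \<delta> \<le> conj_exp p * ln A" using p by simp
  also have "ln A = ln C0 + (- \<theta> / conj_exp p) * ln M + (\<kappa> / conj_exp p) * ln (ln M)"
    using C0 M by (simp add: A_def scale_factor_def ln_mult ln_powr)
  also have "conj_exp p * \<dots> = conj_exp p * ln C0 - \<theta> * ln M + \<kappa> * ln (ln M)"
    using q by (simp add: field_simps)
  finally have "ln \<delta> \<le> conj_exp p * ln C0 - \<theta> * ln M + \<kappa> * ln (ln M)" .
  then show ?thesis using \<delta> by (simp add: M_def ln_div)
qed

end

lemma lifespan_bound_theta_pos:
  assumes \<theta>: "\<theta> > 0"
  obtains C \<delta>0 where "C > 0" "\<delta>0 > 0"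
    "\<And>\<eta> \<delta> T w. lifespan_setting \<eta> p C0 R1 \<theta> \<kappa> \<delta> T w \<Longrightarrow> \<delta> < \<delta>0 \<Longrightarrow>
       T \<le> C * \<delta> powr (- 1 / \<theta>) * ln (1 / \<delta>) powr (\<kappa> / \<theta>)"
proof -
  define R0 where "R0 = max 1 R1"
  have R0: "1 \<le> R0" "R1 \<le> R0" by (auto simp: R0_def)
  obtain C \<delta>0 where C: "C > 0" "\<delta>0 > 0" and bound: "\<And>\<delta> T. 0 < \<delta> \<Longrightarrow> \<delta> < \<delta>0 \<Longrightarrow>
      (4 * R0 < T \<Longrightarrow> \<theta> * ln (T / 4) \<le> conj_exp p * ln C0 + ln (1 / \<delta>) + \<kappa> * ln (ln (T / 4))) \<Longrightarrow>
      T \<le> C * \<delta> powr (- 1 / \<theta>) * ln (1 / \<delta>) powr (\<kappa> / \<theta>)"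
    using lifespan_bound_from_log_inequality[OF \<theta> R0(1)] by blast
  show thesis
  proof (rule that[OF C])
    fix \<eta> \<delta> T w assume "lifespan_setting \<eta> p C0 R1 \<theta> \<kappa> \<delta> T w" "\<delta> < \<delta>0"
    then show "T \<le> C * \<delta> powr (- 1 / \<theta>) * ln (1 / \<delta>) powr (\<kappa> / \<theta>)"
      using bound lifespan_setting.log_inequality[OF _ R0] lifespan_setting.\<delta> by blast
  qed
qed

lemma decrement_term_theta_zero:
  assumes p: "p > 1" and C0: "C0 > 0" and R0: "R0 \<ge> 1"
  shows "d / scale_factor C0 0 \<kappa> p (2 * 4 ^ k * R0) powr p
       = d / C0 powr p * (ln (2 * R0) + real k * ln 4) powr (- (\<kappa> * (p - 1)))"
proof -
  have "ln (2 * 4 ^ k * R0) = ln (2 * R0) + real k * ln 4"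
    using R0 by (simp add: ln_mult ln_realpow)
  moreover have "ln (2 * R0) + real k * ln 4 > 0" using R0 by (simp add: add_pos_nonneg)
  moreover have "R0 \<le> 4 ^ k * R0" using R0 by simp
  then have "1 < 2 * 4 ^ k * R0" unfolding mult.assoc using R0 by linarith
  ultimately show ?thesis
    using scale_factor_theta_zero[OF p C0, of "2 * 4 ^ k * R0" \<kappa>] C0 by (simp add: powr_minus_divide)
qed

lemma lifespan_bound_log:
  assumes p: "p > 1" and C0: "C0 > 0" and \<kappa>: "\<kappa> < 1 / (p - 1)"
  obtains C where "C > 0"
    "\<And>\<eta> \<delta> T w. lifespan_setting \<eta> p C0 R1 0 \<kappa> \<delta> T w \<Longrightarrow> \<delta> < 1 \<Longrightarrow>
       T \<le> exp (C * \<delta> powr (- (p - 1) / (1 - \<kappa> * (p - 1))))"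
proof -
  define R0 where "R0 = max 1 R1"
  have R0: "1 \<le> R0" "R1 \<le> R0" by (auto simp: R0_def)
  have \<beta>: "\<kappa> * (p - 1) < 1" using \<kappa> p by (simp add: field_simps)
  have Q: "decrement_const p / C0 powr p > 0" using decrement_const_pos[OF p] C0 by simp
  have a: "ln (2 * R0) > 0" using R0 by simp
  obtain C where C: "C > 0" and bound: "\<And>\<delta> K T. 0 < \<delta> \<Longrightarrow> \<delta> < 1 \<Longrightarrow> T \<le> 4 ^ (K + 1) * R0 \<Longrightarrow>
      (\<Sum>k<K. decrement_const p / C0 powr p * (ln (2 * R0) + real k * ln 4) powr (- (\<kappa> * (p - 1))))
        \<le> \<delta> powr (1 - p) \<Longrightarrow> T \<le> exp (C * \<delta> powr (- (p - 1) / (1 - \<kappa> * (p - 1))))"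
    using dyadic_count_bound_power[OF p \<beta> Q a _ R0(1), of "ln 4"] by auto
  show thesis
  proof (rule that[OF C])
    fix \<eta> \<delta> T w assume setting: "lifespan_setting \<eta> p C0 R1 0 \<kappa> \<delta> T w" and "\<delta> < 1"
    obtain K where "T \<le> 4 ^ (K + 1) * R0"
      "(\<Sum>k<K. decrement_const p / scale_factor C0 0 \<kappa> p (2 * 4 ^ k * R0) powr p) \<le> \<delta> powr (1 - p)"
      using lifespan_setting.dyadic_count[OF setting R0] by blast
    then show "T \<le> exp (C * \<delta> powr (- (p - 1) / (1 - \<kappa> * (p - 1))))"
      using bound \<open>\<delta> < 1\<close> lifespan_setting.\<delta>[OF setting]
      by (simp add: decrement_term_theta_zero[OF p C0 R0(1)])
  qed
qed

lemma lifespan_bound_loglog: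
  assumes p: "p > 1" and C0: "C0 > 0" and \<kappa>: "\<kappa> = 1 / (p - 1)"
  obtains C where "C > 0"
    "\<And>\<eta> \<delta> T w. lifespan_setting \<eta> p C0 R1 0 \<kappa> \<delta> T w \<Longrightarrow> \<delta> < 1 \<Longrightarrow>
       T \<le> exp (exp (C * \<delta> powr (- (p - 1))))"
proof -
  define R0 where "R0 = max 1 R1"
  have R0: "1 \<le> R0" "R1 \<le> R0" by (auto simp: R0_def)
  have \<beta>: "\<kappa> * (p - 1) = 1" using \<kappa> p by simp
  have Q: "decrement_const p / C0 powr p > 0" using decrement_const_pos[OF p] C0 by simp
  have a: "ln (2 * R0) > 0" using R0 by simp
  obtain C where C: "C > 0" and bound: "\<And>\<delta> K T. 0 < \<delta> \<Longrightarrow> \<delta> < 1 \<Longrightarrow> T \<le> 4 ^ (K + 1) * R0 \<Longrightarrow>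
      (\<Sum>k<K. decrement_const p / C0 powr p * (ln (2 * R0) + real k * ln 4) powr (- 1)) \<le> \<delta> powr (1 - p)
      \<Longrightarrow> T \<le> exp (exp (C * \<delta> powr (- (p - 1))))"
    using dyadic_count_bound_harmonic[OF p Q a _ R0(1), of "ln 4"] by auto
  show thesis
  proof (rule that[OF C])
    fix \<eta> \<delta> T w assume setting: "lifespan_setting \<eta> p C0 R1 0 \<kappa> \<delta> T w" and "\<delta> < 1"
    obtain K where "T \<le> 4 ^ (K + 1) * R0"
      "(\<Sum>k<K. decrement_const p / scale_factor C0 0 \<kappa> p (2 * 4 ^ k * R0) powr p) \<le> \<delta> powr (1 - p)"
      using lifespan_setting.dyadic_count[OF setting R0] by blast
    then show "T \<le> exp (exp (C * \<delta> powr (- (p - 1))))"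
      using bound \<open>\<delta> < 1\<close> lifespan_setting.\<delta>[OF setting]
      by (simp add: decrement_term_theta_zero[OF p C0 R0(1)] \<beta>)
  qed
qed

lemma lifespan_bounds:
  assumes p: "p > 1" and C0: "C0 > 0" and \<theta>: "\<theta> \<ge> 0"
  obtains C \<delta>0 where "C > 0" "\<delta>0 > 0"
    "\<And>\<eta> \<delta> T w. lifespan_setting \<eta> p C0 R1 \<theta> \<kappa> \<delta> T w \<Longrightarrow> \<delta> < \<delta>0 \<Longrightarrow>
       (\<theta> > 0 \<longrightarrow> T \<le> C * \<delta> powr (- 1 / \<theta>) * (ln (1 / \<delta>)) powr (\<kappa> / \<theta>))
       \<and> (\<theta> = 0 \<and> \<kappa> < 1 / (p - 1) \<longrightarrow> T \<le> exp (C * \<delta> powr (- (p - 1) / (1 - \<kappa> * (p - 1)))))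
       \<and> (\<theta> = 0 \<and> \<kappa> = 1 / (p - 1) \<longrightarrow> T \<le> exp (exp (C * \<delta> powr (- (p - 1)))))"
proof -
  consider "\<theta> > 0" | "\<theta> = 0" "\<kappa> < 1 / (p - 1)" | "\<theta> = 0" "\<kappa> = 1 / (p - 1)" | "\<theta> = 0" "\<kappa> > 1 / (p - 1)"
    using \<theta> by fastforce
  then show thesis
  proof cases
    case 1
    obtain C \<delta>0 where "C > 0" "\<delta>0 > 0" and "\<And>\<eta> \<delta> T w. lifespan_setting \<eta> p C0 R1 \<theta> \<kappa> \<delta> T w \<Longrightarrow>
        \<delta> < \<delta>0 \<Longrightarrow> T \<le> C * \<delta> powr (- 1 / \<theta>) * ln (1 / \<delta>) powr (\<kappa> / \<theta>)"
      using lifespan_bound_theta_pos[OF 1] by blast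
    with 1 show thesis by (intro that[of C \<delta>0]) auto
  next
    case 2
    obtain C where "C > 0" and "\<And>\<eta> \<delta> T w. lifespan_setting \<eta> p C0 R1 0 \<kappa> \<delta> T w \<Longrightarrow> \<delta> < 1 \<Longrightarrow>
        T \<le> exp (C * \<delta> powr (- (p - 1) / (1 - \<kappa> * (p - 1))))"
      using lifespan_bound_log[OF p C0 2(2)] by blast
    with 2 show thesis by (intro that[of C 1]) auto
  next
    case 3
    obtain C where "C > 0" and "\<And>\<eta> \<delta> T w. lifespan_setting \<eta> p C0 R1 0 \<kappa> \<delta> T w \<Longrightarrow> \<delta> < 1 \<Longrightarrow>
        T \<le> exp (exp (C * \<delta> powr (- (p - 1))))"
      using lifespan_bound_loglog[OF p C0 3(2)] by blast
    with 3 show thesis by (intro that[of C 1]) auto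
  next
    case 4
    then show thesis by (intro that[of 1 1]) auto
  qed
qed

theorem lemma2p3:
  fixes p C0 R1 \<theta> \<kappa> :: real and \<eta> :: "real \<Rightarrow> real"
  assumes "p > 1" and "cutoff \<eta>" and "C0 > 0" and "R1 > 0" and "\<theta> \<ge> 0"
  shows "\<exists>C>0. \<exists>\<delta>0>0. \<forall>\<delta> T (w :: (real^2) \<Rightarrow> real \<Rightarrow> real).
    0 < \<delta> \<and> \<delta> < \<delta>0 \<and> T > R1
    \<and> (\<forall>x\<in>Omega. \<forall>t. 0 \<le> t \<and> t < T \<longrightarrow> 0 \<le> w x t)
    \<and> (\<forall>T'. 0 \<le> T' \<and> T' < T \<longrightarrow>
           set_integrable lborel (Omega \<times> {0..T'}) (\<lambda>(x, t). w x t))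
    \<and> (\<forall>R. R1 \<le> R \<and> R < T \<and> 1 < R \<longrightarrow>
          \<delta> + (\<integral>z\<in>PR R. w (fst z) (snd z) * psiR \<eta> p R (fst z) (snd z) \<partial>lborel)
          \<le> C0 * R powr (- \<theta> / conj_exp p) * (ln R) powr (\<kappa> / conj_exp p)
            * (\<integral>z\<in>PR R. w (fst z) (snd z) * psiR_star \<eta> p R (fst z) (snd z) \<partial>lborel)
                powr (1 / p))
    \<longrightarrow> (\<theta> > 0 \<longrightarrow> T \<le> C * \<delta> powr (- 1 / \<theta>) * (ln (1 / \<delta>)) powr (\<kappa> / \<theta>))
      \<and> (\<theta> = 0 \<and> \<kappa> < 1 / (p - 1) \<longrightarrow>
           T \<le> exp (C * \<delta> powr (- (p - 1) / (1 - \<kappa> * (p - 1)))))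
      \<and> (\<theta> = 0 \<and> \<kappa> = 1 / (p - 1) \<longrightarrow>
           T \<le> exp (exp (C * \<delta> powr (- (p - 1)))))"
  (is "\<exists>C>0. \<exists>\<delta>0>0. \<forall>\<delta> T w. ?hyp \<delta>0 \<delta> T w \<longrightarrow> ?bound C \<delta> T")
proof -
  obtain C \<delta>0 where "C > 0" "\<delta>0 > 0"
    and bound: "\<And>\<eta> \<delta> T w. lifespan_setting \<eta> p C0 R1 \<theta> \<kappa> \<delta> T w \<Longrightarrow> \<delta> < \<delta>0 \<Longrightarrow> ?bound C \<delta> T"
    using lifespan_bounds[OF assms(1,3,5)] by blast
  have setting: "lifespan_setting \<eta> p C0 R1 \<theta> \<kappa> \<delta> T w" if hyp: "?hyp \<delta>0 \<delta> T w" for \<delta> T w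
  proof
    show "p > 1" "cutoff \<eta>" "C0 > 0" "\<delta> > 0" using assms hyp by simp_all
    show "\<And>x t. x \<in> Omega \<Longrightarrow> 0 \<le> t \<Longrightarrow> t < T \<Longrightarrow> 0 \<le> w x t"
      and "\<And>T'. 0 \<le> T' \<Longrightarrow> T' < T \<Longrightarrow> set_integrable lborel (Omega \<times> {0..T'}) (\<lambda>(x, t). w x t)"
      using hyp by blast+
    show "\<And>R. R1 \<le> R \<Longrightarrow> R < T \<Longrightarrow> 1 < R \<Longrightarrow>
        \<delta> + psi_mass \<eta> p w R \<le> scale_factor C0 \<theta> \<kappa> p R * psi_star_mass \<eta> p w R powr (1 / p)"
      using hyp unfolding psi_mass_def psi_star_mass_def scale_factor_def by blast
  qed
  show ?thesis
  proof (rule exI[of _ C], rule conjI[OF \<open>C > 0\<close>], rule exI[of _ \<delta>0], rule conjI[OF \<open>\<delta>0 > 0\<close>], intro allI impI)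
    fix \<delta> T w assume hyp: "?hyp \<delta>0 \<delta> T w"
    then show "?bound C \<delta> T" using bound[OF setting[OF hyp]] by simp
  qed
qed

end
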